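(* Let $G$ be a planar graph with a fixed embedding in the plane, $u,v\in V(G)$, and let $P$ and $Q$ be internally disjoint $(u,v)$-paths in $G$. Suppose that $P$ is isometric and bypath-free in $H=G[R(P,Q)\cup V(P)\cup V(Q)]$, and that $Q$ is isometric in $H_Q=G[R(P,Q)\cup V(Q)]$. Then either $Q$ is bypath-free in $H_Q$, or there exists a bypath $B$ of $Q$ in $H_Q$ such that: (i) $P$ is isometric and bypath-free in $G[R(P,Q_{\langle B\rangle})\cup V(P)\cup V(Q_{\langle B\rangle})]$; (ii) $Q$ is isometric and bypath-free in $G[R(Q,Q_{\langle B\rangle})\cup V(Q)]$; (iii) $Q_{\langle B\rangle}$ is isometric in $G[R(P,Q_{\langle B\rangle})\cup V(Q_{\langle B\rangle})]$, and is isometric and bypath-free in $G[R(Q,Q_{\langle B\rangle})\cup V(Q_{\langle B\rangle})]$.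
   Context: For two internally disjoint paths $P,Q$ with the same endpoints in the embedded planar graph $G$, $R(P,Q)$ denotes the set of vertices of $G$ lying in the interior of the disk bounded by the closed curve $P\cup Q$. A path $P$ in a graph $H$ is isometric in $H$ if $d_P(x,y)=d_H(x,y)$ for all $x,y\in V(P)$. For a graph $H$ and an isometric path $P=v_1\cdots v_k$ in $H$, a bypath of $P$ in $H$ is a path $B=b_1\cdots b_t$ with $t\ge3$, $V(B)\subseteq V(H)$, $b_1=v_i$, $b_t=v_j$ for some $i<j$ (the branching vertices), $V(B)\cap V(P)=\{v_i,v_j\}$, and such that $v_1\cdots v_ib_2\cdots b_{t-1}v_j\cdots v_k$ is also an isometric path in $H$; this path (obtained from $P$ by replacing its subpath between $v_i$ and $v_j$ by $B$) is denoted $P_{\langle B\rangle}$. $P$ is bypath-free in $H$ if $H$ contains no bypath of $P$. $G[X]$ is the subgraph induced by $X$. *)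

theory Defs
  imports "HOL-Analysis.Analysis"
begin

text \<open>A finite simple graph on vertex set V with symmetric irreflexive adjacency E,
 together with a fixed plane embedding: vertices are placed at distinct points pos v of
 the plane (complex numbers) and every edge xy is drawn as an drw (drw x y) from pos x to
 pos y; arcs avoid other vertices and distinct edges meet only in common endpoints.\<close>

definition plane_graph ::
  "'v set \<Rightarrow> ('v \<Rightarrow> 'v \<Rightarrow> bool) \<Rightarrow> ('v \<Rightarrow> complex) \<Rightarrow> ('v \<Rightarrow> 'v \<Rightarrow> real \<Rightarrow> complex) \<Rightarrow> bool"
where
  "plane_graph V E pos drw \<longleftrightarrow>
     finite V \<and>
     (\<forall>x y. E x y \<longrightarrow> x \<in> V \<and> y \<in> V \<and> x \<noteq> y \<and> E y x) \<and>
     inj_on pos V \<and>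
     (\<forall>x y. E x y \<longrightarrow>
        Path_Connected.arc (drw x y) \<and> pathstart (drw x y) = pos x \<and>
        pathfinish (drw x y) = pos y \<and> drw y x = reversepath (drw x y) \<and>
        path_image (drw x y) \<inter> pos ` V \<subseteq> {pos x, pos y}) \<and>
     (\<forall>x y x' y'. E x y \<and> E x' y' \<and> {x, y} \<noteq> {x', y'} \<longrightarrow>
        path_image (drw x y) \<inter> path_image (drw x' y') \<subseteq> pos ` ({x, y} \<inter> {x', y'}))"

definition gpath :: "'v set \<Rightarrow> ('v \<Rightarrow> 'v \<Rightarrow> bool) \<Rightarrow> 'v list \<Rightarrow> bool" where
  "gpath V E p \<longleftrightarrow> p \<noteq> [] \<and> distinct p \<and> set p \<subseteq> V \<and>
     (\<forall>i. Suc i < length p \<longrightarrow> E (p ! i) (p ! Suc i))"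

fun pcurve :: "('v \<Rightarrow> complex) \<Rightarrow> ('v \<Rightarrow> 'v \<Rightarrow> real \<Rightarrow> complex) \<Rightarrow> 'v list \<Rightarrow> real \<Rightarrow> complex" where
  "pcurve pos drw [] = linepath 0 0"
| "pcurve pos drw [x] = linepath (pos x) (pos x)"
| "pcurve pos drw (x # y # rest) = drw x y +++ pcurve pos drw (y # rest)"

definition region ::
  "'v set \<Rightarrow> ('v \<Rightarrow> complex) \<Rightarrow> ('v \<Rightarrow> 'v \<Rightarrow> real \<Rightarrow> complex) \<Rightarrow> 'v list \<Rightarrow> 'v list \<Rightarrow> 'v set"
where
  "region V pos drw P Q =
     {x \<in> V. pos x \<in> inside (path_image (pcurve pos drw P) \<union> path_image (pcurve pos drw Q))}"

definition walk_in :: "('v \<Rightarrow> 'v \<Rightarrow> bool) \<Rightarrow> 'v set \<Rightarrow> 'v list \<Rightarrow> bool" where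
  "walk_in E X w \<longleftrightarrow> w \<noteq> [] \<and> set w \<subseteq> X \<and>
     (\<forall>i. Suc i < length w \<longrightarrow> E (w ! i) (w ! Suc i))"

definition dist_in :: "('v \<Rightarrow> 'v \<Rightarrow> bool) \<Rightarrow> 'v set \<Rightarrow> 'v \<Rightarrow> 'v \<Rightarrow> nat" where
  "dist_in E X x y =
     (LEAST n. \<exists>w. walk_in E X w \<and> hd w = x \<and> last w = y \<and> length w = Suc n)"

definition isometric :: "'v set \<Rightarrow> ('v \<Rightarrow> 'v \<Rightarrow> bool) \<Rightarrow> 'v set \<Rightarrow> 'v list \<Rightarrow> bool" where
  "isometric V E X P \<longleftrightarrow> gpath V E P \<and> set P \<subseteq> X \<and>
     (\<forall>i j. i < length P \<longrightarrow> j < length P \<longrightarrow>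
        dist_in E X (P ! i) (P ! j) = (if i \<le> j then j - i else i - j))"

definition replace_sub :: "'v list \<Rightarrow> nat \<Rightarrow> nat \<Rightarrow> 'v list \<Rightarrow> 'v list" where
  "replace_sub P i j B = take i P @ B @ drop (Suc j) P"

definition bypath :: "'v set \<Rightarrow> ('v \<Rightarrow> 'v \<Rightarrow> bool) \<Rightarrow> 'v set \<Rightarrow> 'v list \<Rightarrow> 'v list \<Rightarrow> nat \<Rightarrow> nat \<Rightarrow> bool" where
  "bypath V E X P B i j \<longleftrightarrow>
     gpath V E B \<and> length B \<ge> 3 \<and> set B \<subseteq> X \<and>
     i < j \<and> j < length P \<and> hd B = P ! i \<and> last B = P ! j \<and>
     set B \<inter> set P = {P ! i, P ! j} \<and>
     isometric V E X (replace_sub P i j B)"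

definition bypath_free :: "'v set \<Rightarrow> ('v \<Rightarrow> 'v \<Rightarrow> bool) \<Rightarrow> 'v set \<Rightarrow> 'v list \<Rightarrow> bool" where
  "bypath_free V E X P \<longleftrightarrow> \<not> (\<exists>B i j. bypath V E X P B i j)"

end

theory Submission
  imports Defs
begin

text \<open>Choose a bypath B of Q in G[R(P,Q) \<union> V(Q)] for which R(Q,Q<B>) has as few vertices as
 possible. The drawing of B stays in the closed disc bounded by P \<union> Q, so all regions in (i)-(iii)
 lie in R(P,Q) \<union> V(Q); isometry and bypath-freeness of P and isometry of Q and Q<B> pass to these
 smaller vertex sets. A bypath of Q or of Q<B> inside R(Q,Q<B>), spliced in, gives an isometric
 u-v path through a vertex of R(Q,Q<B>) drawn in the closed disc bounded by Q \<union> Q<B>. Its maximal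
 subpath through that vertex with inner vertices off Q is a bypath B2 of Q, and R(Q,Q<B2>) is a
 proper subset of R(Q,Q<B>): by the Jordan curve theorem the inside of P \<union> Q<B> lies outside
 Q \<union> Q<B>, so vertices of B off the new curve lie outside it. This contradicts minimality.\<close>

section \<open>Walks and distances in induced subgraphs\<close>

lemma gpath_iff_successively:
  "gpath V E p \<longleftrightarrow> p \<noteq> [] \<and> distinct p \<and> set p \<subseteq> V \<and> successively E p"
  by (simp add: gpath_def successively_conv_nth)

lemma walk_in_iff_successively:
  "walk_in E X w \<longleftrightarrow> w \<noteq> [] \<and> set w \<subseteq> X \<and> successively E w"
  by (simp add: walk_in_def successively_conv_nth)

lemma walk_in_if_gpath: "gpath V E p \<Longrightarrow> walk_in E V p"
  by (simp add: gpath_def walk_in_def)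

lemma successively_take: "successively P xs \<Longrightarrow> successively P (take k xs)"
  by (metis append_take_drop_id successively_append_iff)

lemma successively_drop: "successively P xs \<Longrightarrow> successively P (drop k xs)"
  by (metis append_take_drop_id successively_append_iff)

lemma walk_in_rev:
  assumes "symp E" "walk_in E X w"
  shows "walk_in E X (rev w)"
proof -
  have "successively (\<lambda>x y. E y x) w"
    using assms by (auto simp: walk_in_iff_successively elim: successively_mono dest: sympD)
  then show ?thesis using assms(2) by (simp add: walk_in_iff_successively)
qed

lemma walk_in_join:
  assumes "walk_in E X w1" "walk_in E X w2" "last w1 = hd w2"
  shows "walk_in E X (w1 @ tl w2) \<and> hd (w1 @ tl w2) = hd w1 \<and> last (w1 @ tl w2) = last w2
     \<and> length (w1 @ tl w2) = length w1 + length w2 - 1"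
proof -
  obtain h t where w2: "w2 = h # t" using assms(2) by (cases w2) (auto simp: walk_in_def)
  have "successively E w1" "successively E (h # t)"
    using assms w2 by (auto simp: walk_in_iff_successively)
  then have "successively E (w1 @ t)"
    using assms(3) w2 by (cases t) (auto simp: successively_append_iff)
  then show ?thesis using assms w2 by (auto simp: walk_in_iff_successively)
qed

lemma walk_in_subpath:
  assumes "gpath V E Y" "set Y \<subseteq> X" "i \<le> j" "j < length Y"
  shows "walk_in E X (drop i (take (Suc j) Y)) \<and> hd (drop i (take (Suc j) Y)) = Y ! i
    \<and> last (drop i (take (Suc j) Y)) = Y ! j \<and> length (drop i (take (Suc j) Y)) = Suc (j - i)"
proof -
  let ?s = "drop i (take (Suc j) Y)"
  have len: "length ?s = Suc (j - i)" using assms by simp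
  have "successively E ?s"
    using assms(1) by (simp add: gpath_iff_successively successively_take successively_drop)
  moreover have "set ?s \<subseteq> X" using assms(2) by (meson in_set_dropD in_set_takeD subset_code(1))
  moreover have "hd ?s = Y ! i" "last ?s = Y ! j"
    using assms len by (simp_all add: hd_drop_conv_nth last_conv_nth nth_take)
  ultimately show ?thesis using len by (auto simp: walk_in_iff_successively)
qed

lemma dist_in_le_length:
  assumes "walk_in E X w" "hd w = x" "last w = y"
  shows "dist_in E X x y \<le> length w - 1"
  unfolding dist_in_def using assms by (intro Least_le exI[of _ w]) (auto simp: walk_in_def)

lemma dist_in_attained:
  assumes "walk_in E X w" "hd w = x" "last w = y"
  shows "\<exists>w'. walk_in E X w' \<and> hd w' = x \<and> last w' = y \<and> length w' = Suc (dist_in E X x y)"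
  unfolding dist_in_def
  by (rule LeastI_ex) (use assms in \<open>auto simp: walk_in_def intro!: exI[of _ "length w - 1"] exI[of _ w]\<close>)

lemma dist_in_sym:
  assumes "symp E"
  shows "dist_in E X x y = dist_in E X y x"
proof -
  have "\<exists>w. walk_in E X w \<and> hd w = b \<and> last w = a \<and> length w = n"
    if "walk_in E X w" "hd w = a" "last w = b" "length w = n" for a b w n
    using that walk_in_rev[OF assms that(1)]
    by (intro exI[of _ "rev w"]) (auto simp: walk_in_def hd_rev last_rev)
  then have "(\<exists>w. walk_in E X w \<and> hd w = x \<and> last w = y \<and> length w = Suc n) \<longleftrightarrow>
        (\<exists>w. walk_in E X w \<and> hd w = y \<and> last w = x \<and> length w = Suc n)" for n
    by blast
  then show ?thesis unfolding dist_in_def by simp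
qed

lemma dist_in_triangle:
  assumes "walk_in E X w1" "hd w1 = x" "last w1 = y"
    and "walk_in E X w2" "hd w2 = y" "last w2 = z"
  shows "dist_in E X x z \<le> dist_in E X x y + dist_in E X y z"
proof -
  obtain a where a: "walk_in E X a" "hd a = x" "last a = y" "length a = Suc (dist_in E X x y)"
    using dist_in_attained[OF assms(1-3)] by blast
  obtain b where b: "walk_in E X b" "hd b = y" "last b = z" "length b = Suc (dist_in E X y z)"
    using dist_in_attained[OF assms(4-6)] by blast
  show ?thesis using dist_in_le_length[of E X "a @ tl b" x z] walk_in_join[OF a(1) b(1)] a b by simp
qed

lemma dist_in_antimono:
  assumes "X' \<subseteq> X" "walk_in E X' w" "hd w = x" "last w = y"
  shows "dist_in E X x y \<le> dist_in E X' x y"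
proof -
  obtain w' where w': "walk_in E X' w'" "hd w' = x" "last w' = y" "length w' = Suc (dist_in E X' x y)"
    using dist_in_attained[OF assms(2-4)] by blast
  then have "walk_in E X w'" using assms(1) by (auto simp: walk_in_def)
  then show ?thesis using dist_in_le_length[of E X w' x y] w' by simp
qed

lemma dist_in_path_le:
  assumes "symp E" "gpath V E Y" "set Y \<subseteq> X" "i < length Y" "j < length Y"
  shows "dist_in E X (Y ! i) (Y ! j) \<le> (if i \<le> j then j - i else i - j)"
proof (cases "i \<le> j")
  case True
  then show ?thesis
    using walk_in_subpath[OF assms(2,3) True assms(5)] dist_in_le_length[of E X] by fastforce
next
  case False
  then have "dist_in E X (Y ! j) (Y ! i) \<le> i - j"
    using walk_in_subpath[OF assms(2,3), of j i] assms dist_in_le_length[of E X] by fastforce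
  then show ?thesis using False dist_in_sym[OF assms(1)] by simp
qed

section \<open>Isometric paths\<close>

lemma isometric_if_dist_endpoints:
  assumes "symp E" "gpath V E Y" "set Y \<subseteq> X" "length Y - 1 \<le> dist_in E X (hd Y) (last Y)"
  shows "isometric V E X Y"
proof -
  let ?n = "length Y"
  have ne: "Y \<noteq> []" using assms(2) by (simp add: gpath_def)
  have ge: "j - i \<le> dist_in E X (Y ! i) (Y ! j)" if ij: "i \<le> j" "j < ?n" for i j
  proof -
    let ?w1 = "drop 0 (take (Suc i) Y)" and ?w2 = "drop i (take (Suc j) Y)"
      and ?w3 = "drop j (take (Suc (?n - 1)) Y)" and ?w4 = "drop 0 (take (Suc j) Y)"
    have w1: "walk_in E X ?w1" "hd ?w1 = Y ! 0" "last ?w1 = Y ! i"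
      using walk_in_subpath[OF assms(2,3), of 0 i] ij by (simp_all del: drop_0)
    have w2: "walk_in E X ?w2" "hd ?w2 = Y ! i" "last ?w2 = Y ! j"
      using walk_in_subpath[OF assms(2,3), of i j] ij by (simp_all del: drop_0)
    have w3: "walk_in E X ?w3" "hd ?w3 = Y ! j" "last ?w3 = Y ! (?n - 1)"
      using walk_in_subpath[OF assms(2,3), of j "?n - 1"] ij by (simp_all del: drop_0)
    have w4: "walk_in E X ?w4" "hd ?w4 = Y ! 0" "last ?w4 = Y ! j"
      using walk_in_subpath[OF assms(2,3), of 0 j] ij by (simp_all del: drop_0)
    have "?n - 1 \<le> dist_in E X (Y ! 0) (Y ! (?n - 1))"
      using assms(4) ne by (simp add: hd_conv_nth last_conv_nth)
    also have "\<dots> \<le> dist_in E X (Y ! 0) (Y ! i) + dist_in E X (Y ! i) (Y ! j)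
        + dist_in E X (Y ! j) (Y ! (?n - 1))"
      using dist_in_triangle[OF w4 w3] dist_in_triangle[OF w1 w2] by linarith
    also have "\<dots> \<le> i + dist_in E X (Y ! i) (Y ! j) + (?n - 1 - j)"
      using dist_in_path_le[OF assms(1-3), of 0 i] dist_in_path_le[OF assms(1-3), of j "?n - 1"] ij ne
      by (simp split: if_splits)
    finally show ?thesis using ij by linarith
  qed
  have "dist_in E X (Y ! i) (Y ! j) = (if i \<le> j then j - i else i - j)" if "i < ?n" "j < ?n" for i j
    using ge[of i j] ge[of j i] dist_in_path_le[OF assms(1-3) that] that dist_in_sym[OF assms(1)]
    by (cases "i \<le> j") simp_all
  then show ?thesis using assms unfolding isometric_def by blast
qed

lemma isometric_dist_endpoints:
  assumes "isometric V E X Y"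
  shows "dist_in E X (hd Y) (last Y) = length Y - 1"
proof -
  have "Y \<noteq> []" using assms by (simp add: isometric_def gpath_def)
  then show ?thesis
    using assms unfolding isometric_def
    by (metis diff_less hd_conv_nth last_conv_nth length_greater_0_conv less_one minus_nat.diff_0 zero_le)
qed

lemma isometric_subset:
  assumes "symp E" "isometric V E X Y" "set Y \<subseteq> X'" "X' \<subseteq> X"
  shows "isometric V E X' Y"
proof (rule isometric_if_dist_endpoints[OF assms(1)])
  show "gpath V E Y" using assms(2) by (simp add: isometric_def)
  show "set Y \<subseteq> X'" by fact
  have "walk_in E X' Y" using assms(2,3) by (auto simp: isometric_def gpath_def walk_in_def)
  then show "length Y - 1 \<le> dist_in E X' (hd Y) (last Y)"
    using dist_in_antimono[OF assms(4)] isometric_dist_endpoints[OF assms(2)] by fastforce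
qed

lemma isometric_length_eq:
  assumes "isometric V E X Y" "isometric V E X Q" "hd Y = hd Q" "last Y = last Q"
  shows "length Y = length Q"
proof -
  have "Y \<noteq> []" "Q \<noteq> []" using assms by (auto simp: isometric_def gpath_def)
  then show ?thesis
    using isometric_dist_endpoints[OF assms(1)] isometric_dist_endpoints[OF assms(2)] assms(3,4)
    by (metis One_nat_def Suc_pred length_greater_0_conv)
qed

lemma isometric_if_length_eq:
  assumes "symp E" "isometric V E X Q" "gpath V E Y" "set Y \<subseteq> X"
    and "hd Y = hd Q" "last Y = last Q" "length Y = length Q"
  shows "isometric V E X Y"
  using isometric_if_dist_endpoints[OF assms(1,3,4)] isometric_dist_endpoints[OF assms(2)] assms(5-7)
  by simp

lemma isometric_index_eq:
  assumes "isometric V E X Y" "isometric V E X Q" "hd Y = hd Q"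
    and "k < length Y" "m < length Q" "Y ! k = Q ! m"
  shows "k = m"
proof -
  have "Y \<noteq> []" "Q \<noteq> []" using assms by (auto simp: isometric_def gpath_def)
  moreover have "dist_in E X (Y ! 0) (Y ! k) = k" "dist_in E X (Q ! 0) (Q ! m) = m"
    using assms(1,2,4,5) unfolding isometric_def by (metis le0 order.strict_trans1 minus_nat.diff_0)+
  ultimately show ?thesis using assms(3,6) by (simp add: hd_conv_nth)
qed

fun path_edges :: "'a list \<Rightarrow> ('a \<times> 'a) set" where
  "path_edges (x # y # r) = insert (x, y) (path_edges (y # r))"
| "path_edges _ = {}"

lemma path_edges_Cons:
  "path_edges (x # ys) = (if ys = [] then {} else insert (x, hd ys) (path_edges ys))"
  by (cases ys) auto

lemma path_edges_append:
  "path_edges (xs @ ys) =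
     path_edges xs \<union> path_edges ys \<union> (if xs \<noteq> [] \<and> ys \<noteq> [] then {(last xs, hd ys)} else {})"
  by (induction xs) (auto simp: path_edges_Cons)

lemma path_edges_eq_zip: "path_edges L = set (zip L (tl L))"
  by (induction L rule: path_edges.induct) auto

lemma path_edges_iff_nth:
  "(a, b) \<in> path_edges L \<longleftrightarrow> (\<exists>k. Suc k < length L \<and> a = L ! k \<and> b = L ! Suc k)"
  by (cases L) (auto simp: path_edges_eq_zip set_zip)

lemma successively_iff_path_edges: "successively P L \<longleftrightarrow> (\<forall>(a, b)\<in>path_edges L. P a b)"
  by (induction L rule: path_edges.induct) auto

lemma path_edges_in_set: "(a, b) \<in> path_edges L \<Longrightarrow> a \<in> set L \<and> b \<in> set L"
  by (induction L rule: path_edges.induct) auto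

lemma path_edges_take: "path_edges (take k L) \<subseteq> path_edges L"
  using path_edges_append[of "take k L" "drop k L"] by auto

lemma path_edges_drop: "path_edges (drop k L) \<subseteq> path_edges L"
  using path_edges_append[of "take k L" "drop k L"] by auto

lemma path_edges_subpath: "path_edges (drop a (take b L)) \<subseteq> path_edges L"
  using path_edges_take path_edges_drop by blast

lemma in_set_take_iff_nth: "x \<in> set (take i Q) \<longleftrightarrow> (\<exists>k. k < i \<and> k < length Q \<and> x = Q ! k)"
  by (auto simp: in_set_conv_nth)

lemma in_set_drop_iff_nth: "x \<in> set (drop i Q) \<longleftrightarrow> (\<exists>k. i \<le> k \<and> k < length Q \<and> x = Q ! k)"
  apply (auto simp: in_set_conv_nth)
  apply (metis add.commute le_add2 less_diff_conv)
  by (metis add_diff_inverse_nat diff_less_mono not_less)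

lemma last_take_eq_nth: "0 < i \<Longrightarrow> i \<le> length Q \<Longrightarrow> last (take i Q) = Q ! (i - 1)"
proof -
  assume "0 < i" "i \<le> length Q"
  then have "take i Q = take (i - 1) Q @ [Q ! (i - 1)]"
    by (metis Suc_diff_1 Suc_le_lessD take_Suc_conv_app_nth)
  then show ?thesis by simp
qed

lemma set_subpath:
  assumes "a \<le> m" "m < length Y"
  shows "set (drop a (take (Suc m) Y)) = {Y ! k | k. a \<le> k \<and> k \<le> m}"
proof -
  have len: "length (drop a (take (Suc m) Y)) = Suc (m - a)" using assms by simp
  have nth: "drop a (take (Suc m) Y) ! t = Y ! (a + t)" if "t < Suc (m - a)" for t
    using that assms by simp
  show ?thesis
  proof (intro set_eqI iffI)
    fix x assume "x \<in> set (drop a (take (Suc m) Y))"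
    then obtain t where "t < Suc (m - a)" "x = drop a (take (Suc m) Y) ! t"
      using len by (metis in_set_conv_nth)
    then have "a + t \<le> m" "x = Y ! (a + t)" using nth assms by auto
    then show "x \<in> {Y ! k | k. a \<le> k \<and> k \<le> m}" by auto
  next
    fix x assume "x \<in> {Y ! k | k. a \<le> k \<and> k \<le> m}"
    then obtain k where "a \<le> k" "k \<le> m" "x = Y ! k" by blast
    then have "k - a < length (drop a (take (Suc m) Y))" "drop a (take (Suc m) Y) ! (k - a) = x"
      using len nth[of "k - a"] by auto
    then show "x \<in> set (drop a (take (Suc m) Y))" by (metis nth_mem)
  qed
qed

lemma set_replace_sub: "set (replace_sub Q i j B) = set (take i Q) \<union> set B \<union> set (drop (Suc j) Q)"
  by (auto simp: replace_sub_def)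

lemma set_replace_sub_subset: "set (replace_sub Q i j B) \<subseteq> set Q \<union> set B"
  unfolding set_replace_sub by (meson Un_iff in_set_dropD in_set_takeD subsetI)

lemma length_replace_sub:
  "i < j \<Longrightarrow> j < length Q \<Longrightarrow> length (replace_sub Q i j B) = i + length B + (length Q - Suc j)"
  by (simp add: replace_sub_def)

lemma hd_replace_sub:
  assumes "i < length Q" "B \<noteq> []" "hd B = Q ! i"
  shows "hd (replace_sub Q i j B) = hd Q"
proof (cases i)
  case 0
  then have "hd (replace_sub Q i j B) = hd B" using assms by (simp add: replace_sub_def)
  then show ?thesis using assms 0 by (simp add: hd_conv_nth)
next
  case (Suc k)
  then have "take i Q \<noteq> []" using assms by auto
  then show ?thesis by (simp add: replace_sub_def)
qed

lemma last_replace_sub: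
  assumes "j < length Q" "B \<noteq> []" "last B = Q ! j"
  shows "last (replace_sub Q i j B) = last Q"
proof (cases "Suc j = length Q")
  case True
  then have "last (replace_sub Q i j B) = last B" using assms by (simp add: replace_sub_def)
  then show ?thesis using assms True by (metis diff_Suc_1 last_conv_nth length_0_conv nat.distinct(1))
next
  case False
  then show ?thesis using assms by (simp add: replace_sub_def)
qed

lemma path_edges_replace_sub:
  assumes "i < j" "j < length Q" "B \<noteq> []" "hd B = Q ! i" "last B = Q ! j"
  shows "path_edges (replace_sub Q i j B) \<subseteq> path_edges Q \<union> path_edges B"
proof -
  have "(last (take i Q), hd B) \<in> path_edges Q" if "i > 0"
    using that assms by (auto simp: last_take_eq_nth path_edges_iff_nth intro!: exI[of _ "i - 1"])
  moreover have "(last B, hd (drop (Suc j) Q)) \<in> path_edges Q" if "drop (Suc j) Q \<noteq> []"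
    using that assms by (auto simp: hd_drop_conv_nth path_edges_iff_nth intro!: exI[of _ j])
  ultimately show ?thesis
    using assms(3) path_edges_take[of i Q] path_edges_drop[of "Suc j" Q] unfolding replace_sub_def path_edges_append by (auto split: if_splits)
qed

lemma gpath_replace_sub:
  assumes Q: "gpath V E Q" and B: "gpath V E B" and ij: "i < j" "j < length Q"
    and hb: "hd B = Q ! i" and lb: "last B = Q ! j" and BQ: "set B \<inter> set Q \<subseteq> {Q ! i, Q ! j}"
  shows "gpath V E (replace_sub Q i j B)"
proof -
  have dQ: "distinct Q" and sQ: "successively E Q" and vQ: "set Q \<subseteq> V"
    using Q by (auto simp: gpath_iff_successively)
  have dB: "distinct B" and sB: "successively E B" and vB: "set B \<subseteq> V" and neB: "B \<noteq> []"
    using B by (auto simp: gpath_iff_successively)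
  have idx: "k = k'" if "k < length Q" "k' < length Q" "Q ! k = Q ! k'" for k k'
    using dQ that nth_eq_iff_index_eq by blast
  have "Q ! k \<notin> set B" if "k < length Q" "k \<noteq> i" "k \<noteq> j" for k
    using BQ idx[of k i] idx[of k j] that ij by auto
  then have "set (take i Q) \<inter> set B = {}" "set (drop (Suc j) Q) \<inter> set B = {}"
    using ij by (auto simp: in_set_take_iff_nth in_set_drop_iff_nth)
  moreover have "set (take i Q) \<inter> set (drop (Suc j) Q) = {}"
    using ij dQ by (auto simp: in_set_take_iff_nth in_set_drop_iff_nth nth_eq_iff_index_eq)
  ultimately have dist: "distinct (replace_sub Q i j B)"
    unfolding replace_sub_def using dQ dB by auto
  have junc1: "E (last (take i Q)) (hd B)" if "take i Q \<noteq> []"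
  proof -
    have "i > 0" using that by auto
    then have "last (take i Q) = Q ! (i - 1)" using ij by (simp add: last_take_eq_nth)
    then show ?thesis using successively_nth[OF sQ, of "i - 1"] hb \<open>i > 0\<close> ij by auto
  qed
  have junc2: "E (last B) (hd (drop (Suc j) Q))" if "drop (Suc j) Q \<noteq> []"
  proof -
    have "hd (drop (Suc j) Q) = Q ! Suc j" using that by (simp add: hd_drop_conv_nth)
    then show ?thesis using successively_nth[OF sQ, of j] lb that by auto
  qed
  have "successively E (replace_sub Q i j B)"
    unfolding replace_sub_def successively_append_iff
    using successively_take[OF sQ] successively_drop[OF sQ] sB junc1 junc2 neB by auto
  moreover have "set (replace_sub Q i j B) \<subseteq> V"
    using vQ vB set_replace_sub_subset[of Q i j B] by blast
  moreover have "replace_sub Q i j B \<noteq> []" using neB by (simp add: replace_sub_def)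
  ultimately show ?thesis using dist by (simp add: gpath_iff_successively)
qed

lemma path_edge_has_interior_vertex:
  assumes "gpath V E L" "3 \<le> length L" "(c, d) \<in> path_edges L"
  shows "(c \<in> set L \<and> c \<noteq> hd L \<and> c \<noteq> last L) \<or> (d \<in> set L \<and> d \<noteq> hd L \<and> d \<noteq> last L)"
proof -
  obtain k where k: "Suc k < length L" "c = L ! k" "d = L ! Suc k"
    using assms(3) unfolding path_edges_iff_nth by blast
  have ne: "L \<noteq> []" and dL: "distinct L" using assms(1) by (auto simp: gpath_def)
  have hl: "hd L = L ! 0" "last L = L ! (length L - 1)" using ne by (simp_all add: hd_conv_nth last_conv_nth)
  note eqi = nth_eq_iff_index_eq[OF dL]
  show ?thesis
  proof (cases k)
    case 0
    have "L ! 1 \<noteq> L ! 0" "L ! 1 \<noteq> L ! (length L - 1)"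
      using assms(2) eqi[of 1 0] eqi[of 1 "length L - 1"] by linarith+
    moreover have "d = L ! 1" "d \<in> set L" using k 0 by simp_all
    ultimately show ?thesis using hl by auto
  next
    case (Suc k')
    have "L ! k \<noteq> L ! 0" "L ! k \<noteq> L ! (length L - 1)"
      using k Suc eqi[of k 0] eqi[of k "length L - 1"] by linarith+
    moreover have "c \<in> set L" using k by simp
    ultimately show ?thesis using hl k by auto
  qed
qed

lemma second_vertex_interior:
  assumes "gpath V E L" "3 \<le> length L"
  shows "L ! 1 \<in> set L" "L ! 1 \<noteq> hd L" "L ! 1 \<noteq> last L"
proof -
  have ne: "L \<noteq> []" and dL: "distinct L" using assms(1) by (auto simp: gpath_def)
  note eqi = nth_eq_iff_index_eq[OF dL]
  show "L ! 1 \<in> set L" using assms(2) by simp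
  have "L ! 1 \<noteq> L ! 0" using assms(2) eqi[of 1 0] by linarith
  then show "L ! 1 \<noteq> hd L" using ne by (simp add: hd_conv_nth)
  have "L ! 1 \<noteq> L ! (length L - 1)" using assms(2) eqi[of 1 "length L - 1"] by linarith
  then show "L ! 1 \<noteq> last L" using ne by (simp add: last_conv_nth)
qed

lemma path_edge_not_ends:
  assumes "gpath V E L" "3 \<le> length L" "(a, b) \<in> path_edges L"
  shows "{a, b} \<noteq> {hd L, last L}"
proof
  assume "{a, b} = {hd L, last L}"
  then have "a \<in> {hd L, last L}" "b \<in> {hd L, last L}" by blast+
  then show False using path_edge_has_interior_vertex[OF assms] by blast
qed

section \<open>Bypaths\<close>

lemma bypath_replace_sub:
  assumes "isometric V E X Q" "bypath V E X Q B i j"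
  shows "isometric V E X (replace_sub Q i j B)" "hd (replace_sub Q i j B) = hd Q"
    "last (replace_sub Q i j B) = last Q" "length (replace_sub Q i j B) = length Q"
proof -
  have B: "B \<noteq> []" "j < length Q" "hd B = Q ! i" "last B = Q ! j"
    using assms(2) by (auto simp: bypath_def gpath_def)
  show iso: "isometric V E X (replace_sub Q i j B)"
    using assms(2) by (simp add: bypath_def)
  show hd: "hd (replace_sub Q i j B) = hd Q"
    using B assms(2) by (simp add: bypath_def hd_replace_sub)
  show last: "last (replace_sub Q i j B) = last Q"
    using B by (simp add: last_replace_sub)
  show "length (replace_sub Q i j B) = length Q"
    using isometric_length_eq[OF iso assms(1) hd last] .
qed

lemma bypath_length:
  assumes "isometric V E X Q" "bypath V E X Q B i j"
  shows "length B = Suc (j - i)" "3 \<le> length Q"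
proof -
  have ij: "i < j" "j < length Q" "3 \<le> length B" using assms(2) by (auto simp: bypath_def)
  then have "length (replace_sub Q i j B) = i + length B + (length Q - Suc j)"
    by (simp add: length_replace_sub)
  then show "length B = Suc (j - i)" using bypath_replace_sub(4)[OF assms] ij by linarith
  then show "3 \<le> length Q" using ij by linarith
qed

lemma bypath_interior:
  assumes "bypath V E X Q B i j" "w \<in> set B" "w \<noteq> hd B" "w \<noteq> last B"
  shows "w \<in> X" "w \<notin> set Q"
  using assms by (auto simp: bypath_def)

lemma bypath_superset:
  assumes "symp E" "isometric V E X Q" "isometric V E X' Q" "X' \<subseteq> X" "bypath V E X' Q B i j"
  shows "bypath V E X Q B i j"
proof -
  have "isometric V E X (replace_sub Q i j B)"
  proof (rule isometric_if_length_eq[OF assms(1,2)])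
    show "gpath V E (replace_sub Q i j B)" "set (replace_sub Q i j B) \<subseteq> X"
      using bypath_replace_sub(1)[OF assms(3,5)] assms(4) by (auto simp: isometric_def)
  qed (use bypath_replace_sub[OF assms(3,5)] in simp_all)
  then show ?thesis using assms(4,5) unfolding bypath_def by blast
qed

lemma bypath_free_subset:
  assumes "symp E" "isometric V E X Q" "isometric V E X' Q" "X' \<subseteq> X" "bypath_free V E X Q"
  shows "bypath_free V E X' Q"
  using assms bypath_superset unfolding bypath_free_def by blast

lemma exists_minimal_bypath:
  fixes f :: "'v list \<Rightarrow> nat \<Rightarrow> nat \<Rightarrow> nat"
  assumes "\<not> bypath_free V E X Q"
  shows "\<exists>B i j. bypath V E X Q B i j \<and>
    (\<forall>B' i' j'. bypath V E X Q B' i' j' \<longrightarrow> f B i j \<le> f B' i' j')"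
proof -
  obtain t where "bypath V E X Q (fst t) (fst (snd t)) (snd (snd t))"
    using assms unfolding bypath_free_def by auto
  from ex_has_least_nat[where P = "\<lambda>t. bypath V E X Q (fst t) (fst (snd t)) (snd (snd t))",
      OF this, of "\<lambda>t. f (fst t) (fst (snd t)) (snd (snd t))"]
  show ?thesis by fastforce
qed

text \<open>An isometric path Y with the ends of the isometric path Q leaves Q only along bypaths: the
 k-th vertex of Y, if it lies on Q, is the k-th vertex of Q, so every maximal subpath of Y whose
 inner vertices avoid Q can replace the corresponding subpath of Q.\<close>

lemma isometric_common_vertex_index:
  assumes "isometric V E X Q" "isometric V E X Y" "hd Y = hd Q" "last Y = last Q"
    and "k < length Y" "Y ! k \<in> set Q"
  shows "Y ! k = Q ! k"
proof -
  obtain m where m: "m < length Q" "Q ! m = Y ! k" using assms(6) by (auto simp: in_set_conv_nth)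
  then show ?thesis using isometric_index_eq[OF assms(2,1,3,5) m(1)] by simp
qed

lemma bypath_of_subpath:
  assumes sym: "symp E" and Qi: "isometric V E X Q" and Yi: "isometric V E X Y"
    and ends: "hd Y = hd Q" "last Y = last Q"
    and am: "Suc a < m" "m < length Y" and on_Q: "Y ! a \<in> set Q" "Y ! m \<in> set Q"
    and off_Q: "\<And>k. a < k \<Longrightarrow> k < m \<Longrightarrow> Y ! k \<notin> set Q"
  shows "bypath V E X Q (drop a (take (Suc m) Y)) a m"
proof -
  define B where "B = drop a (take (Suc m) Y)"
  have gY: "gpath V E Y" and sY: "set Y \<subseteq> X" and gQ: "gpath V E Q"
    using Yi Qi by (auto simp: isometric_def)
  have lenY: "length Y = length Q" using isometric_length_eq[OF Yi Qi ends] .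
  have seg: "walk_in E X B" "hd B = Y ! a" "last B = Y ! m" "length B = Suc (m - a)"
    using walk_in_subpath[OF gY sY, of a m] am unfolding B_def by simp_all
  have same: "Y ! a = Q ! a" "Y ! m = Q ! m"
    using isometric_common_vertex_index[OF Qi Yi ends] am on_Q by simp_all
  have setB: "set B = {Y ! k | k. a \<le> k \<and> k \<le> m}"
    using set_subpath[of a m Y] am unfolding B_def by simp
  have BQ: "set B \<inter> set Q = {Q ! a, Q ! m}"
  proof
    show "set B \<inter> set Q \<subseteq> {Q ! a, Q ! m}"
      using off_Q same by (auto simp: setB) (metis le_neq_implies_less)
    show "{Q ! a, Q ! m} \<subseteq> set B \<inter> set Q"
      using same am lenY by (auto simp: setB intro: exI[of _ a] exI[of _ m])
  qed
  have setBY: "set B \<subseteq> set Y" unfolding B_def by (meson in_set_dropD in_set_takeD subsetI)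
  have gB: "gpath V E B"
    using seg(1) setBY gY unfolding B_def by (auto simp: gpath_iff_successively walk_in_iff_successively)
  have grs: "gpath V E (replace_sub Q a m B)"
    using gpath_replace_sub[OF gQ gB] am lenY BQ seg same by simp
  have "isometric V E X (replace_sub Q a m B)"
  proof (rule isometric_if_length_eq[OF sym Qi grs])
    show "set (replace_sub Q a m B) \<subseteq> X"
      using set_replace_sub_subset[of Q a m B] setBY sY Qi by (auto simp: isometric_def)
    have "B \<noteq> []" using seg(4) by auto
    then show "hd (replace_sub Q a m B) = hd Q" "last (replace_sub Q a m B) = last Q"
      "length (replace_sub Q a m B) = length Q"
      using am lenY seg same by (simp_all add: hd_replace_sub last_replace_sub length_replace_sub)
  qed
  then show ?thesis
    unfolding bypath_def B_def[symmetric] using gB seg am lenY setBY sY same BQ by auto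
qed

lemma bypath_within_isometric_path:
  assumes sym: "symp E" and Qi: "isometric V E X Q" and Yi: "isometric V E X Y"
    and ends: "hd Y = hd Q" "last Y = last Q" and w: "w \<in> set Y" "w \<notin> set Q"
  shows "\<exists>B a b. bypath V E X Q B a b \<and> w \<in> set B \<and> set B \<subseteq> set Y
    \<and> path_edges B \<subseteq> path_edges Y"
proof -
  define n where "n = length Y"
  have "Y \<noteq> []" using Yi by (simp add: isometric_def gpath_def)
  then have Y0: "Y ! 0 \<in> set Q" and Yn: "Y ! (n - 1) \<in> set Q"
    using ends Qi n_def by (metis hd_conv_nth last_conv_nth hd_in_set last_in_set isometric_def gpath_def)+
  obtain p where p: "p < n" "Y ! p = w" using w(1) n_def by (auto simp: in_set_conv_nth)
  have p_inner: "0 < p" "p < n - 1" using Y0 Yn p w(2) by (metis gr0I, metis diff_Suc_1 less_SucE n_def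
      \<open>Y \<noteq> []\<close> length_greater_0_conv Suc_pred)
  define A where "A = {k. k < p \<and> Y ! k \<in> set Q}"
  define M where "M = {k. p < k \<and> k < n \<and> Y ! k \<in> set Q}"
  define a where "a = Max A"
  define m where "m = Min M"
  have "finite A" "finite M" "0 \<in> A" "n - 1 \<in> M" using p_inner Y0 Yn unfolding A_def M_def by auto
  then have aA: "a \<in> A" "\<And>k. k \<in> A \<Longrightarrow> k \<le> a" and mM: "m \<in> M" "\<And>k. k \<in> M \<Longrightarrow> m \<le> k"
    unfolding a_def m_def by (auto intro: Max_in Min_in)
  have apm: "a < p" "p < m" "m < n" "Y ! a \<in> set Q" "Y ! m \<in> set Q"
    using aA mM unfolding A_def M_def by auto
  have off_Q: "Y ! k \<notin> set Q" if "a < k" "k < m" for k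
  proof (cases k p rule: linorder_cases)
    case less then show ?thesis using that aA(2)[of k] unfolding A_def by fastforce
  next
    case equal then show ?thesis using p w(2) by simp
  next
    case greater then show ?thesis using that mM(2)[of k] apm unfolding M_def by fastforce
  qed
  have "bypath V E X Q (drop a (take (Suc m) Y)) a m"
    using bypath_of_subpath[OF sym Qi Yi ends _ _ _ _ off_Q] apm n_def by simp
  moreover have "w \<in> set (drop a (take (Suc m) Y))"
    using set_subpath[of a m Y] p apm n_def by auto
  moreover have "set (drop a (take (Suc m) Y)) \<subseteq> set Y"
    by (meson in_set_dropD in_set_takeD subsetI)
  ultimately show ?thesis using path_edges_subpath by blast
qed

section \<open>Insides and outsides of nested closed sets\<close>

lemma connected_subset_inside:
  assumes "connected C" "C \<inter> S = {}" "z \<in> C" "z \<in> inside S"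
  shows "C \<subseteq> inside S"
proof
  fix c assume "c \<in> C"
  then have "connected_component (- S) z c"
    using assms by (intro connected_componentI[of C]) auto
  then show "c \<in> inside S" using inside_same_component assms(4) by blast
qed

lemma connected_subset_outside:
  assumes "connected C" "C \<inter> S = {}" "z \<in> C" "z \<in> outside S"
  shows "C \<subseteq> outside S"
proof
  fix c assume "c \<in> C"
  then have "connected_component (- S) z c"
    using assms by (intro connected_componentI[of C]) auto
  then show "c \<in> outside S" using outside_same_component assms(4) by blast
qed

lemma outside_subset_outside:
  fixes S T :: "'a::real_normed_vector set"
  assumes "T \<subseteq> S \<union> inside S"
  shows "outside S \<subseteq> outside T"
proof
  fix x assume x: "x \<in> outside S"
  let ?C = "connected_component_set (- S) x"
  have "?C \<subseteq> outside S"
    using x outside_same_component by (metis mem_Collect_eq subsetI)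
  moreover have "outside S \<subseteq> - T" using assms union_with_inside by blast
  ultimately have "?C \<subseteq> connected_component_set (- T) x"
    using x by (intro connected_component_maximal) (auto simp: outside_def)
  moreover have "\<not> bounded ?C" using x by (simp add: outside)
  ultimately have "\<not> bounded (connected_component_set (- T) x)" using bounded_subset by blast
  then show "x \<in> outside T" by (simp add: outside)
qed

lemma inside_subset_union_inside:
  fixes S T :: "'a::real_normed_vector set"
  assumes "T \<subseteq> S \<union> inside S"
  shows "inside T \<subseteq> S \<union> inside S"
  using outside_subset_outside[OF assms] union_with_inside[of S] inside_Int_outside[of T] by blast

lemma outside_if_on_frontier_outside:
  fixes S T :: "'a::real_normed_vector set"
  assumes "closed T" "frontier (outside S) = S" "T \<subseteq> S \<union> inside S" "z \<in> S" "z \<notin> T"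
  shows "z \<in> outside T"
proof -
  have "z \<in> closure (outside S)" using assms(2,4) by (metis Diff_iff frontier_def)
  also have "\<dots> \<subseteq> closure (outside T)" using outside_subset_outside[OF assms(3)] by (rule closure_mono)
  also have "\<dots> \<subseteq> T \<union> outside T" using closure_outside_subset[OF assms(1)] by blast
  finally show ?thesis using assms(5) by blast
qed

text \<open>The inside of S1 is connected, misses S and meets the outside of S near z, so it lies
 outside S and hence outside T; every point of S1 is a limit of such points.\<close>

lemma outside_if_on_inner_frontier:
  fixes S S0 S1 T :: "'a::real_normed_vector set"
  assumes cS: "closed S" and cT: "closed T" and cS1: "closed S1"
    and fo0: "frontier (outside S0) = S0" and fi1: "frontier (inside S1) = S1"
    and ci1: "connected (inside S1)"
    and SS0: "S \<subseteq> S0 \<union> inside S0" and S1S0: "S1 \<subseteq> S0 \<union> inside S0" and SS01: "S \<subseteq> S0 \<union> S1"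
    and z: "z \<in> S0" "z \<in> S1" "z \<notin> S"
    and TS: "T \<subseteq> S \<union> inside S" and x: "x \<in> S1" "x \<notin> T"
  shows "x \<in> outside T"
proof -
  have "inside S1 \<inter> S0 = {}"
    using outside_if_on_frontier_outside[OF cS1 fo0 S1S0] inside_no_overlap[of S1]
      inside_Int_outside[of S1] by blast
  then have disj: "inside S1 \<inter> S = {}" using SS01 inside_no_overlap[of S1] by blast
  have "z \<in> outside S" using outside_if_on_frontier_outside[OF cS fo0 SS0 z(1) z(3)] .
  moreover have "z \<in> closure (inside S1)" using fi1 z(2) by (metis Diff_iff frontier_def)
  ultimately have "outside S \<inter> inside S1 \<noteq> {}"
    using open_Int_closure_eq_empty[OF open_outside[OF cS]] by blast
  then obtain y where "y \<in> inside S1" "y \<in> outside S" by blast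
  then have "inside S1 \<subseteq> outside T"
    using connected_subset_outside[OF ci1 disj] outside_subset_outside[OF TS] by blast
  have "x \<in> closure (inside S1)" using fi1 x(1) by (metis Diff_iff frontier_def)
  also have "\<dots> \<subseteq> closure (outside T)" using \<open>inside S1 \<subseteq> outside T\<close> by (rule closure_mono)
  also have "\<dots> \<subseteq> T \<union> outside T" using closure_outside_subset[OF cT] by blast
  finally show ?thesis using x(2) by blast
qed

section \<open>Drawings of paths in a plane graph\<close>

locale embedded_graph =
  fixes V :: "'v set" and E :: "'v \<Rightarrow> 'v \<Rightarrow> bool"
    and pos :: "'v \<Rightarrow> complex" and drw :: "'v \<Rightarrow> 'v \<Rightarrow> real \<Rightarrow> complex"
  assumes plane: "plane_graph V E pos drw"
begin

abbreviation drawing :: "'v list \<Rightarrow> complex set" where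
  "drawing L \<equiv> path_image (pcurve pos drw L)"

lemma finite_V: "finite V"
  using plane unfolding plane_graph_def by blast

lemma adj_props: "E x y \<Longrightarrow> x \<in> V \<and> y \<in> V \<and> x \<noteq> y \<and> E y x"
  using plane unfolding plane_graph_def by blast

lemma symp_adj: "symp E"
  using adj_props by (auto intro: sympI)

lemma inj_on_pos: "inj_on pos V"
  using plane unfolding plane_graph_def by blast

lemma arc_drw:
  assumes "E x y"
  shows "arc (drw x y)" "pathstart (drw x y) = pos x" "pathfinish (drw x y) = pos y"
    "drw y x = reversepath (drw x y)" "path_image (drw x y) \<inter> pos ` V \<subseteq> {pos x, pos y}"
  using plane assms unfolding plane_graph_def by blast+

lemma edge_drawings_meet:
  assumes "E x y" "E x' y'" "{x, y} \<noteq> {x', y'}"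
  shows "path_image (drw x y) \<inter> path_image (drw x' y') \<subseteq> pos ` ({x, y} \<inter> {x', y'})"
  using plane assms unfolding plane_graph_def by blast

lemma path_image_drw_swap: "E x y \<Longrightarrow> path_image (drw y x) = path_image (drw x y)"
  using arc_drw(4) by (simp add: path_image_reversepath)

lemma adj_if_path_edge: "walk_in E V L \<Longrightarrow> (a, b) \<in> path_edges L \<Longrightarrow> E a b"
  by (auto simp: walk_in_iff_successively successively_iff_path_edges)

lemma pcurve_props:
  "walk_in E V L \<Longrightarrow> path (pcurve pos drw L) \<and> pathstart (pcurve pos drw L) = pos (hd L) \<and>
    drawing L = pos ` set L \<union> (\<Union>(a, b)\<in>path_edges L. path_image (drw a b))"
proof (induction L rule: path_edges.induct)
  case (1 x y rest)
  have E: "E x y" and walk: "walk_in E V (y # rest)"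
    using "1.prems" by (auto simp: walk_in_iff_successively)
  have "pathfinish (drw x y) = pathstart (pcurve pos drw (y # rest))"
    using arc_drw(3)[OF E] "1.IH"[OF walk] by simp
  moreover have "pos x \<in> path_image (drw x y)"
    using arc_drw(2)[OF E] by (metis pathstart_in_path_image)
  ultimately show ?case
    using "1.IH"[OF walk] arc_imp_path[OF arc_drw(1)[OF E]] arc_drw(2)[OF E]
    by (auto simp: path_image_join)
qed (auto simp: walk_in_def path_def pathstart_def pathfinish_def)

lemma drawing_eq:
  "walk_in E V L \<Longrightarrow> drawing L = pos ` set L \<union> (\<Union>(a, b)\<in>path_edges L. path_image (drw a b))"
  using pcurve_props by blast

lemma closed_drawing: "walk_in E V L \<Longrightarrow> closed (drawing L)"
  using pcurve_props closed_path_image by blast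

lemma pos_in_drawing: "walk_in E V L \<Longrightarrow> w \<in> set L \<Longrightarrow> pos w \<in> drawing L"
  using drawing_eq by blast

lemma edge_drawing_subset:
  "walk_in E V L \<Longrightarrow> (a, b) \<in> path_edges L \<Longrightarrow> path_image (drw a b) \<subseteq> drawing L"
  using drawing_eq by blast

lemma drawing_subsetI:
  assumes "walk_in E V L" "\<And>w. w \<in> set L \<Longrightarrow> pos w \<in> W"
    and "\<And>a b. (a, b) \<in> path_edges L \<Longrightarrow> path_image (drw a b) \<subseteq> W"
  shows "drawing L \<subseteq> W"
proof
  fix p assume "p \<in> drawing L"
  then consider "p \<in> pos ` set L" | a b where "(a, b) \<in> path_edges L" "p \<in> path_image (drw a b)"
    unfolding drawing_eq[OF assms(1)] by blast
  then show "p \<in> W" using assms(2,3) by cases auto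
qed

lemma drawing_subset_Un:
  assumes "walk_in E V L" "walk_in E V L1" "walk_in E V L2"
    and "set L \<subseteq> set L1 \<union> set L2" "path_edges L \<subseteq> path_edges L1 \<union> path_edges L2"
  shows "drawing L \<subseteq> drawing L1 \<union> drawing L2"
proof (rule drawing_subsetI[OF assms(1)])
  show "pos w \<in> drawing L1 \<union> drawing L2" if "w \<in> set L" for w
    using that assms(4) pos_in_drawing[OF assms(2)] pos_in_drawing[OF assms(3)] by blast
  show "path_image (drw a b) \<subseteq> drawing L1 \<union> drawing L2" if "(a, b) \<in> path_edges L" for a b
    using that assms(5) edge_drawing_subset[OF assms(2)] edge_drawing_subset[OF assms(3)] by blast
qed

lemma drawing_replace_sub:
  assumes "walk_in E V Q" "bypath V E X Q B i j"
  shows "drawing (replace_sub Q i j B) \<subseteq> drawing Q \<union> drawing B"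
proof (rule drawing_subset_Un[OF _ assms(1)])
  show "walk_in E V (replace_sub Q i j B)" "walk_in E V B"
    using assms(2) by (auto simp: bypath_def isometric_def walk_in_if_gpath)
  show "path_edges (replace_sub Q i j B) \<subseteq> path_edges Q \<union> path_edges B"
    using assms(2) by (intro path_edges_replace_sub) (auto simp: bypath_def gpath_def)
qed (rule set_replace_sub_subset)

lemma vertex_on_drawing:
  assumes "walk_in E V L" "x \<in> V" "pos x \<in> drawing L"
  shows "x \<in> set L"
proof -
  have sL: "set L \<subseteq> V" using assms(1) by (simp add: walk_in_def)
  consider "pos x \<in> pos ` set L" | a b where "(a, b) \<in> path_edges L" "pos x \<in> path_image (drw a b)"
    using assms drawing_eq[OF assms(1)] by blast
  then show ?thesis
  proof cases
    case 1
    then show ?thesis using inj_on_pos sL assms(2) by (metis inj_on_image_mem_iff)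
  next
    case 2
    have Eab: "E a b" using adj_if_path_edge[OF assms(1) 2(1)] .
    then have "pos x \<in> {pos a, pos b}" using arc_drw(5)[OF Eab] 2(2) assms(2) by blast
    then have "x = a \<or> x = b" using inj_on_pos assms(2) adj_props[OF Eab] by (auto dest: inj_onD)
    then show ?thesis using path_edges_in_set[OF 2(1)] by auto
  qed
qed

lemma edge_meets_drawing:
  assumes "walk_in E V L" "E x y" "x \<notin> set L"
  shows "path_image (drw x y) \<inter> drawing L \<subseteq> {pos y}"
proof
  fix q assume q: "q \<in> path_image (drw x y) \<inter> drawing L"
  have xV: "x \<in> V" using adj_props[OF assms(2)] by auto
  have sL: "set L \<subseteq> V" using assms(1) by (simp add: walk_in_def)
  consider w where "w \<in> set L" "q = pos w"
    | a b where "(a, b) \<in> path_edges L" "q \<in> path_image (drw a b)"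
    using q drawing_eq[OF assms(1)] by blast
  then show "q \<in> {pos y}"
  proof cases
    case 1
    have "pos w \<noteq> pos x" using 1 inj_on_pos sL xV assms(3) by (metis inj_onD subsetD)
    then show ?thesis using arc_drw(5)[OF assms(2)] 1 q sL by blast
  next
    case 2
    have Eab: "E a b" using adj_if_path_edge[OF assms(1) 2(1)] .
    have abL: "a \<in> set L" "b \<in> set L" using path_edges_in_set[OF 2(1)] by auto
    then have "{x, y} \<noteq> {a, b}" using assms(3) by auto
    then have "q \<in> pos ` ({x, y} \<inter> {a, b})" using edge_drawings_meet[OF assms(2) Eab] q 2(2) by blast
    then show ?thesis using abL assms(3) by auto
  qed
qed

text \<open>The curve pcurve of a path ends in a constant segment, so it is never an arc. arc_curve
 drops that segment; for a path with at least two vertices it is an arc with the same image.\<close>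

fun arc_curve :: "'v list \<Rightarrow> real \<Rightarrow> complex" where
  "arc_curve (x # y # z # r) = drw x y +++ arc_curve (y # z # r)"
| "arc_curve [x, y] = drw x y"
| "arc_curve _ = linepath 0 0"

lemma arc_curve_props:
  "gpath V E L \<Longrightarrow> 2 \<le> length L \<Longrightarrow> arc (arc_curve L) \<and> pathstart (arc_curve L) = pos (hd L)
    \<and> pathfinish (arc_curve L) = pos (last L) \<and> path_image (arc_curve L) = drawing L"
proof (induction L rule: arc_curve.induct)
  case (1 x y z r)
  let ?rest = "y # z # r"
  have Exy: "E x y" and g': "gpath V E ?rest" and xn: "x \<notin> set ?rest"
    using "1.prems"(1) by (auto simp: gpath_iff_successively)
  have IH: "arc (arc_curve ?rest)" "pathstart (arc_curve ?rest) = pos y"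
    "pathfinish (arc_curve ?rest) = pos (last ?rest)" "path_image (arc_curve ?rest) = drawing ?rest"
    using "1.IH"[OF g'] by simp_all
  have "path_image (drw x y) \<inter> path_image (arc_curve ?rest) \<subseteq> {pathstart (arc_curve ?rest)}"
    using edge_meets_drawing[OF walk_in_if_gpath[OF g'] Exy xn] IH by simp
  then have "arc (arc_curve (x # ?rest))"
    using arc_join[OF arc_drw(1)[OF Exy]] IH arc_drw(3)[OF Exy] by simp
  moreover have "drawing (x # ?rest) = path_image (drw x y) \<union> drawing ?rest"
    using drawing_eq[OF walk_in_if_gpath[OF "1.prems"(1)]] drawing_eq[OF walk_in_if_gpath[OF g']]
      pathstart_in_path_image[of "drw x y"] arc_drw(2)[OF Exy] by auto
  ultimately show ?case
    using IH arc_drw(2,3)[OF Exy] by (simp add: path_image_join)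
next
  case (2 x y)
  then have Exy: "E x y" by (simp add: gpath_iff_successively)
  have "drawing [x, y] = path_image (drw x y)"
    using drawing_eq[OF walk_in_if_gpath[OF "2.prems"(1)]] arc_drw(2,3)[OF Exy]
      pathstart_in_path_image[of "drw x y"] pathfinish_in_path_image[of "drw x y"] by auto
  then show ?case using arc_drw(1-3)[OF Exy] by simp
qed auto

text \<open>The hypothesis on the length of L2 excludes L1 = L2 = [u, v].\<close>

lemma drawings_meet_at_ends:
  assumes g1: "gpath V E L1" and g2: "gpath V E L2"
    and ends: "hd L1 = u" "hd L2 = u" "last L1 = v" "last L2 = v"
    and disj: "set L1 \<inter> set L2 = {u, v}" and l2: "3 \<le> length L2"
  shows "drawing L1 \<inter> drawing L2 \<subseteq> {pos u, pos v}"
proof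
  fix q assume q: "q \<in> drawing L1 \<inter> drawing L2"
  have w1: "walk_in E V L1" and w2: "walk_in E V L2" using g1 g2 walk_in_if_gpath by auto
  have s1: "set L1 \<subseteq> V" and s2: "set L2 \<subseteq> V" using g1 g2 by (auto simp: gpath_def)
  show "q \<in> {pos u, pos v}"
  proof (cases "q \<in> pos ` set L1 \<union> pos ` set L2")
    case True
    then obtain w where w: "w \<in> set L1 \<union> set L2" "q = pos w" by blast
    then have "w \<in> V" using s1 s2 by blast
    moreover have "pos w \<in> drawing L1" "pos w \<in> drawing L2" using q w(2) by auto
    ultimately have "w \<in> set L1 \<inter> set L2"
      using vertex_on_drawing[OF w1] vertex_on_drawing[OF w2] by blast
    then show ?thesis using w(2) unfolding disj by blast
  next
    case False
    then have "q \<in> (\<Union>(a, b)\<in>path_edges L1. path_image (drw a b))"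
      "q \<in> (\<Union>(c, d)\<in>path_edges L2. path_image (drw c d))"
      using q unfolding drawing_eq[OF w1] drawing_eq[OF w2] by blast+
    then obtain a b c d where ab: "(a, b) \<in> path_edges L1" "q \<in> path_image (drw a b)"
      and cd: "(c, d) \<in> path_edges L2" "q \<in> path_image (drw c d)"
      by blast
    have Eab: "E a b" and Ecd: "E c d"
      using adj_if_path_edge[OF w1 ab(1)] adj_if_path_edge[OF w2 cd(1)] .
    have abL: "a \<in> set L1" "b \<in> set L1" and cdL: "c \<in> set L2" "d \<in> set L2"
      using path_edges_in_set[OF ab(1)] path_edges_in_set[OF cd(1)] by auto
    have "{a, b} \<noteq> {c, d}"
    proof
      assume same: "{a, b} = {c, d}"
      then have "a \<in> set L1 \<inter> set L2" "b \<in> set L1 \<inter> set L2" using abL cdL by auto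
      then have "a \<in> {u, v}" "b \<in> {u, v}" unfolding disj .
      then have "{a, b} = {u, v}" using adj_props[OF Eab] by auto
      then show False using path_edge_not_ends[OF g2 l2 cd(1)] same ends by simp
    qed
    then have "q \<in> pos ` ({a, b} \<inter> {c, d})" using edge_drawings_meet[OF Eab Ecd] ab(2) cd(2) by blast
    then obtain w where "w \<in> set L1 \<inter> set L2" "q = pos w" using abL cdL by blast
    then show ?thesis unfolding disj by blast
  qed
qed

lemma jordan_digon:
  assumes g1: "gpath V E L1" and g2: "gpath V E L2"
    and ends: "hd L1 = u" "hd L2 = u" "last L1 = v" "last L2 = v"
    and uv: "u \<noteq> v" and disj: "set L1 \<inter> set L2 = {u, v}" and l2: "3 \<le> length L2"
  shows "frontier (inside (drawing L1 \<union> drawing L2)) = drawing L1 \<union> drawing L2"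
    and "frontier (outside (drawing L1 \<union> drawing L2)) = drawing L1 \<union> drawing L2"
    and "connected (inside (drawing L1 \<union> drawing L2))"
proof -
  have l1: "2 \<le> length L1"
  proof (cases L1)
    case Nil then show ?thesis using g1 by (simp add: gpath_def)
  next
    case (Cons a list) then show ?thesis using ends uv by (cases list) auto
  qed
  have a1: "arc (arc_curve L1) \<and> pathstart (arc_curve L1) = pos u
    \<and> pathfinish (arc_curve L1) = pos v \<and> path_image (arc_curve L1) = drawing L1"
    using arc_curve_props[OF g1 l1] ends by simp
  have a2: "arc (arc_curve L2) \<and> pathstart (arc_curve L2) = pos u
    \<and> pathfinish (arc_curve L2) = pos v \<and> path_image (arc_curve L2) = drawing L2"
    using arc_curve_props[OF g2] l2 ends by simp
  let ?g1 = "arc_curve L1" and ?g2 = "reversepath (arc_curve L2)"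
  have "path_image ?g1 \<inter> path_image ?g2 \<subseteq> {pathstart ?g1, pathstart ?g2}"
    using drawings_meet_at_ends[OF g1 g2 ends disj l2] a1 a2 by (simp add: path_image_reversepath)
  moreover have "arc ?g1" "arc ?g2" using a1 a2 arc_reversepath by blast+
  moreover have "pathfinish ?g1 = pathstart ?g2" "pathfinish ?g2 = pathstart ?g1"
    using a1 a2 by (simp_all add: pathstart_reversepath pathfinish_reversepath)
  ultimately have simple: "simple_path (?g1 +++ ?g2)" by (intro simple_path_join_loop)
  have closed: "pathfinish (?g1 +++ ?g2) = pathstart (?g1 +++ ?g2)" using a1 a2 by simp
  have image: "path_image (?g1 +++ ?g2) = drawing L1 \<union> drawing L2"
    using a1 a2 by (simp add: path_image_join path_image_reversepath)
  note Jordan = Jordan_inside_outside[OF simple closed, unfolded image]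
  show "frontier (inside (drawing L1 \<union> drawing L2)) = drawing L1 \<union> drawing L2"
    and "frontier (outside (drawing L1 \<union> drawing L2)) = drawing L1 \<union> drawing L2"
    and "connected (inside (drawing L1 \<union> drawing L2))"
    using Jordan by simp_all
qed


lemma edge_drawing_in_closed_region:
  assumes w1: "walk_in E V L1" and w2: "walk_in E V L2" and Exy: "E x y"
    and x_in: "pos x \<in> inside (drawing L1 \<union> drawing L2)"
  shows "path_image (drw x y) \<subseteq> (drawing L1 \<union> drawing L2) \<union> inside (drawing L1 \<union> drawing L2)"
proof -
  let ?S = "drawing L1 \<union> drawing L2" and ?g = "drw x y"
  have "x \<notin> set L1" "x \<notin> set L2"
    using pos_in_drawing[OF w1] pos_in_drawing[OF w2] x_in inside_no_overlap by blast+
  then have meet: "path_image ?g \<inter> ?S \<subseteq> {pos y}"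
    using edge_meets_drawing[OF w1 Exy] edge_meets_drawing[OF w2 Exy] by blast
  have arc: "arc ?g" "pathstart ?g = pos x" "pathfinish ?g = pos y" using arc_drw[OF Exy] by auto
  then have x_on: "pos x \<in> path_image ?g" by (metis pathstart_in_path_image)
  show ?thesis
  proof (cases "pos y \<in> ?S")
    case True
    let ?A = "?g ` {0..<1}"
    have "connected ?A"
      using arc_imp_path[OF arc(1)] unfolding path_def
      by (intro connected_continuous_image) (auto intro: continuous_on_subset)
    moreover have "?A \<inter> ?S = {}"
    proof (rule ccontr)
      assume "?A \<inter> ?S \<noteq> {}"
      then obtain t where t: "0 \<le> t" "t < 1" "?g t \<in> ?S" by fastforce
      then have "?g t \<in> path_image ?g" by (auto simp: path_image_def)
      then have "?g t = ?g 1" using meet t(3) arc(3) by (auto simp: pathfinish_def)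
      then show False using arc(1) t by (auto simp: arc_def dest: inj_onD)
    qed
    moreover have "pos x \<in> ?A" using arc(2) by (force simp: pathstart_def)
    ultimately have "?A \<subseteq> inside ?S" using connected_subset_inside x_in by blast
    moreover have "path_image ?g \<subseteq> ?A \<union> {?g 1}"
      by (auto simp: path_image_def) (metis atLeastAtMost_iff atLeastLessThan_iff image_eqI order_less_le)
    moreover have "?g 1 \<in> ?S" using True arc(3) by (simp add: pathfinish_def)
    ultimately show ?thesis by blast
  next
    case False
    then have "path_image ?g \<inter> ?S = {}" using meet by blast
    then show ?thesis
      using connected_subset_inside[OF connected_path_image[OF arc_imp_path[OF arc(1)]] _ x_on x_in]
      by blast
  qed
qed

lemma drawing_in_closed_region:
  assumes w1: "walk_in E V L1" and w2: "walk_in E V L2" and B: "gpath V E B" "3 \<le> length B"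
    and ends: "\<And>w. w \<in> set B \<Longrightarrow> pos w \<in> drawing L1 \<union> drawing L2 \<union> inside (drawing L1 \<union> drawing L2)"
    and inner: "\<And>w. w \<in> set B \<Longrightarrow> w \<noteq> hd B \<Longrightarrow> w \<noteq> last B \<Longrightarrow> pos w \<in> inside (drawing L1 \<union> drawing L2)"
  shows "drawing B \<subseteq> drawing L1 \<union> drawing L2 \<union> inside (drawing L1 \<union> drawing L2)"
proof (rule drawing_subsetI[OF walk_in_if_gpath[OF B(1)] ends])
  fix c d assume cd: "(c, d) \<in> path_edges B"
  have Ecd: "E c d" using adj_if_path_edge[OF walk_in_if_gpath[OF B(1)] cd] .
  from path_edge_has_interior_vertex[OF B cd]
  consider "pos c \<in> inside (drawing L1 \<union> drawing L2)" | "pos d \<in> inside (drawing L1 \<union> drawing L2)"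
    using inner by blast
  then show "path_image (drw c d) \<subseteq> drawing L1 \<union> drawing L2 \<union> inside (drawing L1 \<union> drawing L2)"
  proof cases
    case 1
    then show ?thesis using edge_drawing_in_closed_region[OF w1 w2 Ecd] by blast
  next
    case 2
    then show ?thesis
      using edge_drawing_in_closed_region[OF w1 w2 sympD[OF symp_adj Ecd]]
        path_image_drw_swap[OF Ecd] by simp
  qed
qed

lemma exists_non_vertex_point:
  assumes "walk_in E V L" "2 \<le> length L"
  shows "\<exists>z\<in>drawing L. z \<notin> pos ` V"
proof -
  have e: "(L ! 0, L ! 1) \<in> path_edges L"
    using assms(2) unfolding path_edges_iff_nth by (intro exI[of _ 0]) simp
  then have E: "E (L ! 0) (L ! 1)" using adj_if_path_edge[OF assms(1)] by blast
  let ?g = "drw (L ! 0) (L ! 1)"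
  have inj: "inj_on ?g {0..1}" using arc_drw(1)[OF E] by (simp add: arc_def)
  have mid: "?g (1/2) \<in> path_image ?g" by (auto simp: path_image_def)
  have "?g (1/2) \<noteq> ?g 0" "?g (1/2) \<noteq> ?g 1" using inj by (auto dest: inj_onD)
  then have "?g (1/2) \<notin> {pos (L ! 0), pos (L ! 1)}"
    using arc_drw(2,3)[OF E] by (simp add: pathstart_def pathfinish_def)
  then have "?g (1/2) \<notin> pos ` V" using arc_drw(5)[OF E] mid by blast
  moreover have "?g (1/2) \<in> drawing L" using edge_drawing_subset[OF assms(1) e] mid by blast
  ultimately show ?thesis by blast
qed

lemma region_disjoint:
  assumes "walk_in E V L1" "walk_in E V L2"
  shows "region V pos drw L1 L2 \<inter> set L1 = {}" "region V pos drw L1 L2 \<inter> set L2 = {}"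
  using pos_in_drawing[OF assms(1)] pos_in_drawing[OF assms(2)] inside_no_overlap
  unfolding region_def by blast+

lemma finite_region: "finite (region V pos drw L1 L2)"
  using finite_V unfolding region_def by simp

end

section \<open>Bypaths of the second side of an isometric digon\<close>

locale isometric_digon = embedded_graph +
  fixes u v and P Q
  assumes uv: "u \<in> V" "v \<in> V"
    and P: "gpath V E P" "hd P = u" "last P = v"
    and Q: "gpath V E Q" "hd Q = u" "last Q = v"
    and disj: "set P \<inter> set Q = {u, v}"
    and Piso: "isometric V E (region V pos drw P Q \<union> set P \<union> set Q) P"
    and Pfree: "bypath_free V E (region V pos drw P Q \<union> set P \<union> set Q) P"
    and Qiso: "isometric V E (region V pos drw P Q \<union> set Q) Q"
begin

abbreviation "R \<equiv> region V pos drw P Q"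
abbreviation "XQ \<equiv> R \<union> set Q"
abbreviation "S0 \<equiv> drawing P \<union> drawing Q"

lemma walk_P: "walk_in E V P" and walk_Q: "walk_in E V Q"
  using P(1) Q(1) by (simp_all add: walk_in_if_gpath)

end

locale digon_bypath = isometric_digon +
  fixes B and i j
  assumes bypath: "bypath V E (region V pos drw P Q \<union> set Q) Q B i j"
begin

abbreviation "QB \<equiv> replace_sub Q i j B"
abbreviation "R' \<equiv> region V pos drw Q QB"
abbreviation "S \<equiv> drawing Q \<union> drawing QB"
abbreviation "S1 \<equiv> drawing P \<union> drawing QB"

lemma isometric_QB: "isometric V E XQ QB"
  and hd_QB: "hd QB = u" and last_QB: "last QB = v" and length_QB: "length QB = length Q"
  using bypath_replace_sub[OF Qiso bypath] Q by simp_all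

lemma gpath_QB: "gpath V E QB" and walk_QB: "walk_in E V QB" and QB_subset: "set QB \<subseteq> XQ"
  using isometric_QB by (auto simp: isometric_def walk_in_if_gpath)

lemma gpath_B: "gpath V E B" and length_B: "3 \<le> length B"
  using bypath by (auto simp: bypath_def)

lemma length_Q: "3 \<le> length Q"
  using bypath_length(2)[OF Qiso bypath] .

lemma set_QB: "set QB \<subseteq> set Q \<union> set B" and B_subset_QB: "set B \<subseteq> set QB"
  using set_replace_sub_subset[of Q i j B] by (auto simp: set_replace_sub)

lemma B_in_R: "w \<in> set B \<Longrightarrow> w \<notin> set Q \<Longrightarrow> w \<in> R"
  using bypath by (auto simp: bypath_def)

lemma u_neq_v: "u \<noteq> v"
proof -
  have "distinct Q" "Q \<noteq> []" using Q(1) by (auto simp: gpath_def)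
  then have "Q ! 0 \<noteq> Q ! (length Q - 1)" using length_Q nth_eq_iff_index_eq by fastforce
  then show ?thesis using Q \<open>Q \<noteq> []\<close> by (simp add: hd_conv_nth last_conv_nth)
qed

lemma P_QB_disjoint: "set P \<inter> set QB = {u, v}"
proof
  show "set P \<inter> set QB \<subseteq> {u, v}"
    using set_QB B_in_R region_disjoint(1)[OF walk_P walk_Q] disj by blast
  have "u \<in> set QB" "v \<in> set QB" using hd_QB last_QB gpath_QB
    by (metis gpath_def hd_in_set last_in_set)+
  then show "{u, v} \<subseteq> set P \<inter> set QB" using disj by blast
qed

lemma frontier_outside_S0: "frontier (outside S0) = S0"
  using jordan_digon(2)[OF P(1) Q(1) P(2) Q(2) P(3) Q(3) u_neq_v disj length_Q] .

lemma frontier_inside_S1: "frontier (inside S1) = S1" and connected_inside_S1: "connected (inside S1)"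
  using jordan_digon(1,3)[OF P(1) gpath_QB P(2) hd_QB P(3) last_QB u_neq_v P_QB_disjoint]
    length_QB length_Q by simp_all

lemma drawing_B: "drawing B \<subseteq> S0 \<union> inside S0"
proof (rule drawing_in_closed_region[OF walk_P walk_Q gpath_B length_B])
  fix w assume "w \<in> set B"
  then have "w \<in> set Q \<or> w \<in> R" using B_in_R by blast
  then show "pos w \<in> S0 \<union> inside S0" using pos_in_drawing[OF walk_Q] by (auto simp: region_def)
next
  fix w assume "w \<in> set B" "w \<noteq> hd B" "w \<noteq> last B"
  then have "w \<in> R" using bypath_interior[OF bypath] by blast
  then show "pos w \<in> inside S0" by (simp add: region_def)
qed

lemma drawing_QB: "drawing QB \<subseteq> drawing Q \<union> drawing B"
  using drawing_replace_sub[OF walk_Q bypath] .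

lemma exists_point_on_P_off_S: "\<exists>z\<in>drawing P. z \<notin> S"
proof -
  have "2 \<le> length P"
  proof (cases P)
    case Nil then show ?thesis using P(1) by (simp add: gpath_def)
  next
    case (Cons a list) then show ?thesis using P u_neq_v by (cases list) auto
  qed
  then obtain z where z: "z \<in> drawing P" "z \<notin> pos ` V" using exists_non_vertex_point[OF walk_P] by blast
  have "drawing P \<inter> drawing Q \<subseteq> {pos u, pos v}"
    using drawings_meet_at_ends[OF P(1) Q(1) P(2) Q(2) P(3) Q(3) disj length_Q] .
  moreover have "drawing P \<inter> drawing QB \<subseteq> {pos u, pos v}"
    using drawings_meet_at_ends[OF P(1) gpath_QB P(2) hd_QB P(3) last_QB P_QB_disjoint]
      length_QB length_Q by simp
  ultimately show ?thesis using z uv by blast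
qed

lemma outside_if_vertex_of_B:
  assumes "closed T" "T \<subseteq> S \<union> inside S" "x \<in> set B" "pos x \<notin> T"
  shows "pos x \<in> outside T"
proof -
  obtain z where z: "z \<in> drawing P" "z \<notin> S" using exists_point_on_P_off_S by blast
  have "pos x \<in> S1" using pos_in_drawing[OF walk_QB] B_subset_QB assms(3) by blast
  moreover have "S \<subseteq> S0 \<union> inside S0" "S1 \<subseteq> S0 \<union> inside S0" using drawing_QB drawing_B by blast+
  moreover have "closed S" "closed S1"
    using closed_drawing[OF walk_P] closed_drawing[OF walk_Q] closed_drawing[OF walk_QB] by blast+
  ultimately show ?thesis
    using outside_if_on_inner_frontier[OF _ assms(1) _ frontier_outside_S0 frontier_inside_S1
        connected_inside_S1 _ _ _ _ _ _ assms(2) _ assms(4)] z by blast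
qed


lemma R'_subset_R: "R' \<subseteq> R"
proof
  fix x assume x: "x \<in> R'"
  then have xV: "x \<in> V" and x_in: "pos x \<in> inside S" by (auto simp: region_def)
  have S_S0: "S \<subseteq> S0 \<union> inside S0" using drawing_QB drawing_B by blast
  have "pos x \<notin> S0"
  proof
    assume "pos x \<in> S0"
    moreover have "pos x \<notin> S" using x_in inside_no_overlap by blast
    ultimately have "pos x \<in> outside S"
      using outside_if_on_frontier_outside[OF _ frontier_outside_S0 S_S0]
        closed_drawing[OF walk_Q] closed_drawing[OF walk_QB] by blast
    then show False using x_in inside_Int_outside by blast
  qed
  then show "x \<in> R" using inside_subset_union_inside[OF S_S0] x_in xV by (auto simp: region_def)
qed

lemma region_P_QB_subset: "region V pos drw P QB \<subseteq> R \<union> set Q"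
proof
  fix x assume x: "x \<in> region V pos drw P QB"
  then have xV: "x \<in> V" and x_in: "pos x \<in> inside S1" by (auto simp: region_def)
  have "S1 \<subseteq> S0 \<union> inside S0" using drawing_QB drawing_B by blast
  then consider "pos x \<in> S0" | "pos x \<in> inside S0" using inside_subset_union_inside x_in by blast
  then show "x \<in> R \<union> set Q"
  proof cases
    case 1
    have "x \<notin> set P" using x_in pos_in_drawing[OF walk_P] inside_no_overlap by blast
    then show ?thesis using 1 vertex_on_drawing[OF walk_P xV] vertex_on_drawing[OF walk_Q xV] by blast
  next
    case 2
    then show ?thesis using xV by (simp add: region_def)
  qed
qed

lemma isometric_P_new: "isometric V E (region V pos drw P QB \<union> set P \<union> set QB) P"
  and bypath_free_P_new: "bypath_free V E (region V pos drw P QB \<union> set P \<union> set QB) P"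
  and isometric_Q_R': "isometric V E (R' \<union> set Q) Q"
  and isometric_QB_P: "isometric V E (region V pos drw P QB \<union> set QB) QB"
  and isometric_QB_R': "isometric V E (R' \<union> set QB) QB"
proof -
  have sub: "region V pos drw P QB \<union> set P \<union> set QB \<subseteq> R \<union> set P \<union> set Q"
    "region V pos drw P QB \<union> set QB \<subseteq> XQ" "R' \<union> set Q \<subseteq> XQ" "R' \<union> set QB \<subseteq> XQ"
    using region_P_QB_subset R'_subset_R QB_subset by blast+
  show P_new: "isometric V E (region V pos drw P QB \<union> set P \<union> set QB) P"
    using isometric_subset[OF symp_adj Piso _ sub(1)] by blast
  show "bypath_free V E (region V pos drw P QB \<union> set P \<union> set QB) P"
    using bypath_free_subset[OF symp_adj Piso P_new sub(1) Pfree] .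
  show "isometric V E (R' \<union> set Q) Q"
    using isometric_subset[OF symp_adj Qiso _ sub(3)] by blast
  show "isometric V E (region V pos drw P QB \<union> set QB) QB"
    using isometric_subset[OF symp_adj isometric_QB _ sub(2)] by blast
  show "isometric V E (R' \<union> set QB) QB"
    using isometric_subset[OF symp_adj isometric_QB _ sub(4)] by blast
qed

text \<open>The new region can only lose vertices, since vertices of B off the new curve lie outside it;
 and it loses w, which lies on the new curve.\<close>

lemma region_psubset_R':
  assumes bp: "bypath V E XQ Q B2 a b" and drawing_B2: "drawing B2 \<subseteq> S \<union> inside S"
    and w: "w \<in> set B2" "w \<in> R'"
  shows "region V pos drw Q (replace_sub Q a b B2) \<subset> R'"
proof -
  let ?Q2 = "replace_sub Q a b B2"
  let ?T = "drawing Q \<union> drawing ?Q2"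
  have walk_Q2: "walk_in E V ?Q2"
    using bp by (auto simp: bypath_def isometric_def walk_in_if_gpath)
  have T_S: "?T \<subseteq> S \<union> inside S" using drawing_replace_sub[OF walk_Q bp] drawing_B2 by blast
  have closed_T: "closed ?T" using closed_drawing[OF walk_Q] closed_drawing[OF walk_Q2] by blast
  have "region V pos drw Q ?Q2 \<subseteq> R'"
  proof
    fix x assume x: "x \<in> region V pos drw Q ?Q2"
    then have xV: "x \<in> V" and x_in: "pos x \<in> inside ?T" by (auto simp: region_def)
    have x_off: "pos x \<notin> ?T" using x_in inside_no_overlap by blast
    show "x \<in> R'"
    proof (rule ccontr)
      assume "x \<notin> R'"
      then have "pos x \<in> S" using inside_subset_union_inside[OF T_S] x_in xV by (auto simp: region_def)
      then have "x \<in> set Q \<or> x \<in> set QB"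
        using vertex_on_drawing[OF walk_Q xV] vertex_on_drawing[OF walk_QB xV] by blast
      moreover have "x \<notin> set Q" using x_off pos_in_drawing[OF walk_Q] by blast
      ultimately have "x \<in> set B" using set_QB by blast
      then have "pos x \<in> outside ?T" using outside_if_vertex_of_B[OF closed_T T_S _ x_off] by blast
      then show False using x_in inside_Int_outside by blast
    qed
  qed
  moreover have "w \<notin> region V pos drw Q ?Q2"
  proof
    assume "w \<in> region V pos drw Q ?Q2"
    moreover have "w \<in> set ?Q2" using w(1) by (simp add: set_replace_sub)
    ultimately show False using region_disjoint(2)[OF walk_Q walk_Q2] by blast
  qed
  ultimately show ?thesis using w(2) by blast
qed

lemma smaller_bypath_through_R':
  assumes Yi: "isometric V E XQ Y" and ends: "hd Y = u" "last Y = v"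
    and drawing_Y: "drawing Y \<subseteq> S \<union> inside S" and w: "w \<in> set Y" "w \<in> R'"
  shows "\<exists>B2 a b. bypath V E XQ Q B2 a b \<and> card (region V pos drw Q (replace_sub Q a b B2)) < card R'"
proof -
  have "w \<notin> set Q" using w(2) region_disjoint(1)[OF walk_Q walk_QB] by blast
  moreover have "hd Y = hd Q" "last Y = last Q" using ends Q by simp_all
  ultimately obtain B2 a b where B2: "bypath V E XQ Q B2 a b" "w \<in> set B2" "set B2 \<subseteq> set Y"
    "path_edges B2 \<subseteq> path_edges Y"
    using bypath_within_isometric_path[OF symp_adj Qiso Yi _ _ w(1)] by blast
  have "walk_in E V B2" "walk_in E V Y"
    using B2(1) Yi by (auto simp: bypath_def isometric_def walk_in_if_gpath)
  then have "drawing B2 \<subseteq> drawing Y" using drawing_subset_Un[of B2 Y Y] B2(3,4) by simp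
  then have "region V pos drw Q (replace_sub Q a b B2) \<subset> R'"
    using region_psubset_R'[OF B2(1) _ B2(2) w(2)] drawing_Y by blast
  then show ?thesis using B2(1) psubset_card_mono[OF finite_region] by blast
qed

text \<open>A bypath inside R' of Q or of QB, spliced in, yields an isometric u-v path in the closed region
 between Q and QB through a vertex of R'.\<close>

lemma smaller_bypath_if_bypath_in_R':
  assumes L: "L = Q \<or> L = QB" and bp: "bypath V E (R' \<union> set L) L B' a b"
  shows "\<exists>B2 a b. bypath V E XQ Q B2 a b \<and> card (region V pos drw Q (replace_sub Q a b B2)) < card R'"
proof -
  let ?Y = "replace_sub L a b B'"
  have iso_L: "isometric V E XQ L" and ends_L: "hd L = u" "last L = v" "length L = length Q"
    and walk_L: "walk_in E V L" and drawing_L: "drawing L \<subseteq> S"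
    using L Qiso isometric_QB Q hd_QB last_QB length_QB walk_Q walk_QB by auto
  have "isometric V E (R' \<union> set L) L"
    by (rule isometric_subset[OF symp_adj iso_L]) (use R'_subset_R iso_L in \<open>auto simp: isometric_def\<close>)
  note Y = bypath_replace_sub[OF this bp]
  have iso_Y: "isometric V E XQ ?Y"
  proof (rule isometric_if_length_eq[OF symp_adj Qiso])
    show "gpath V E ?Y" "set ?Y \<subseteq> XQ" using Y(1) R'_subset_R iso_L by (auto simp: isometric_def)
  qed (use Y ends_L Q in simp_all)
  have B': "gpath V E B'" "3 \<le> length B'" using bp by (auto simp: bypath_def)
  have B'_inner: "w \<in> R'" if "w \<in> set B'" "w \<noteq> hd B'" "w \<noteq> last B'" for w
    using bypath_interior[OF bp that] by blast
  have "drawing B' \<subseteq> S \<union> inside S"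
  proof (rule drawing_in_closed_region[OF walk_Q walk_QB B'])
    show "pos w \<in> S \<union> inside S" if "w \<in> set B'" for w
      using that bp pos_in_drawing[OF walk_L] drawing_L by (auto simp: bypath_def region_def)
    show "pos w \<in> inside S" if "w \<in> set B'" "w \<noteq> hd B'" "w \<noteq> last B'" for w
      using B'_inner[OF that] by (simp add: region_def)
  qed
  then have "drawing ?Y \<subseteq> S \<union> inside S" using drawing_replace_sub[OF walk_L bp] drawing_L by blast
  moreover have "B' ! 1 \<in> set ?Y" "B' ! 1 \<in> R'"
    using second_vertex_interior[OF B'] B'_inner by (auto simp: set_replace_sub)
  ultimately show ?thesis using smaller_bypath_through_R'[OF iso_Y] Y(2,3) ends_L by simp
qed

lemma bypath_free_if_minimal:
  assumes "\<And>B2 a b. bypath V E XQ Q B2 a b \<Longrightarrow> card R' \<le> card (region V pos drw Q (replace_sub Q a b B2))"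
  shows "bypath_free V E (R' \<union> set Q) Q" "bypath_free V E (R' \<union> set QB) QB"
proof -
  have "\<not> bypath V E (R' \<union> set L) L B' a b" if "L = Q \<or> L = QB" for L B' a b
    using smaller_bypath_if_bypath_in_R'[OF that] assms leD by blast
  then show "bypath_free V E (R' \<union> set Q) Q" "bypath_free V E (R' \<union> set QB) QB"
    unfolding bypath_free_def by blast+
qed

end

theorem lemma4p3:
  fixes V :: "'v set" and E :: "'v \<Rightarrow> 'v \<Rightarrow> bool"
    and pos :: "'v \<Rightarrow> complex" and drw :: "'v \<Rightarrow> 'v \<Rightarrow> real \<Rightarrow> complex"
    and u v :: 'v and P Q :: "'v list"
  assumes G: "plane_graph V E pos drw"
    and uv: "u \<in> V" "v \<in> V"
    and P: "gpath V E P" "hd P = u" "last P = v"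
    and Q: "gpath V E Q" "hd Q = u" "last Q = v"
    and disj: "set P \<inter> set Q = {u, v}"
    and Piso: "isometric V E (region V pos drw P Q \<union> set P \<union> set Q) P"
    and Pfree: "bypath_free V E (region V pos drw P Q \<union> set P \<union> set Q) P"
    and Qiso: "isometric V E (region V pos drw P Q \<union> set Q) Q"
  shows "bypath_free V E (region V pos drw P Q \<union> set Q) Q \<or>
    (\<exists>B i j. bypath V E (region V pos drw P Q \<union> set Q) Q B i j \<and>
       (let QB = replace_sub Q i j B in
          isometric V E (region V pos drw P QB \<union> set P \<union> set QB) P \<and>
          bypath_free V E (region V pos drw P QB \<union> set P \<union> set QB) P \<and>
          isometric V E (region V pos drw Q QB \<union> set Q) Q \<and>
          bypath_free V E (region V pos drw Q QB \<union> set Q) Q \<and>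
          isometric V E (region V pos drw P QB \<union> set QB) QB \<and>
          isometric V E (region V pos drw Q QB \<union> set QB) QB \<and>
          bypath_free V E (region V pos drw Q QB \<union> set QB) QB))"
proof -
  interpret isometric_digon V E pos drw u v P Q
    using assms by unfold_locales
  show ?thesis
  proof (cases "bypath_free V E XQ Q")
    case False
    then obtain B i j where bp: "bypath V E XQ Q B i j" and minimal:
      "\<And>B2 a b. bypath V E XQ Q B2 a b \<Longrightarrow>
        card (region V pos drw Q (replace_sub Q i j B)) \<le> card (region V pos drw Q (replace_sub Q a b B2))"
      using exists_minimal_bypath[of V E XQ Q "\<lambda>B i j. card (region V pos drw Q (replace_sub Q i j B))"]
      by blast
    interpret digon_bypath V E pos drw u v P Q B i j
      using bp by unfold_locales
    show ?thesis
      using bp isometric_P_new bypath_free_P_new isometric_Q_R' isometric_QB_P isometric_QB_R'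
        bypath_free_if_minimal[OF minimal] unfolding Let_def by blast
  qed (rule disjI1)
qed

end
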